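(* Consider the deterministic forward–backward system: find continuous functions $\mu,h:[0,T]\to\mathbb{R}$ such that $$\frac{d\mu_t}{dt}=-w_t^{-2}h_t,\qquad \frac{dh_t}{dt}=0,\qquad t\in[0,T],\qquad \mu_0=0,\qquad h_T=g(\mu_T).$$ This system has exactly three solutions, namely $$(\mu_t,h_t)_{t\in[0,T]}=\Big(-A\int_0^t w_s^{-2}\,ds,\;A\Big)_{t\in[0,T]},\qquad A\in\{-1,0,1\}.$$
   Context: Fix $T>0$, $\kappa\in\mathbb{R}$ and $\delta\in(0,T)$. Let $\eta:[0,T]\to\mathbb{R}$ be the solution of the Riccati equation $\eta_t'=\eta_t^2-2\kappa\eta_t-1$, $\eta_T=1$. Set $w_t=\exp\big(\int_t^T(\eta_s-\kappa)\,ds\big)$ and $r_t=\int_t^T w_s^{-2}\,ds$ for $t\in[0,T]$; note $r_\delta>0$. Define $g:\mathbb{R}\to\mathbb{R}$ by $g(x)=-x/r_\delta$ if $|x|\le r_\delta$ and $g(x)=-\mathrm{sign}(x)$ if $|x|>r_\delta$. *)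

theory Defs
  imports "HOL-Analysis.Analysis"
begin

definition wfun :: "real \<Rightarrow> real \<Rightarrow> (real \<Rightarrow> real) \<Rightarrow> real \<Rightarrow> real" where
  "wfun T \<kappa> \<eta> t = exp (integral {t..T} (\<lambda>s. \<eta> s - \<kappa>))"

definition rfun :: "real \<Rightarrow> real \<Rightarrow> (real \<Rightarrow> real) \<Rightarrow> real \<Rightarrow> real" where
  "rfun T \<kappa> \<eta> t = integral {t..T} (\<lambda>s. 1 / (wfun T \<kappa> \<eta> s)^2)"

definition gfun :: "real \<Rightarrow> real \<Rightarrow> real" where
  "gfun rd x = (if \<bar>x\<bar> \<le> rd then - x / rd else - sgn x)"

definition is_solution :: "real \<Rightarrow> real \<Rightarrow> (real \<Rightarrow> real) \<Rightarrow> real \<Rightarrow>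
    (real \<Rightarrow> real) \<Rightarrow> (real \<Rightarrow> real) \<Rightarrow> bool" where
  "is_solution T \<kappa> \<eta> \<delta> \<mu> h \<longleftrightarrow>
     continuous_on {0..T} \<mu> \<and> continuous_on {0..T} h \<and>
     (\<forall>t\<in>{0..T}. (\<mu> has_real_derivative (- (1 / (wfun T \<kappa> \<eta> t)^2) * h t)) (at t within {0..T})) \<and>
     (\<forall>t\<in>{0..T}. (h has_real_derivative 0) (at t within {0..T})) \<and>
     \<mu> 0 = 0 \<and> h T = gfun (rfun T \<kappa> \<eta> \<delta>) (\<mu> T)"

end

theory Submission
  imports Defs
begin

text \<open>Since \<open>dh/dt = 0\<close>, \<open>h\<close> is a constant \<open>A\<close>, and then \<open>\<mu>\<^sub>t = -A \<integral>\<^sub>0\<^sup>t w\<^sub>s\<^sup>-\<^sup>2 ds\<close>.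
  With \<open>R = \<integral>\<^sub>0\<^sup>T w\<^sub>s\<^sup>-\<^sup>2 ds\<close> the terminal condition becomes the scalar fixed-point
  equation \<open>A = g(-A R)\<close>. Because \<open>0 < r\<^sub>\<delta> < R\<close>, the linear branch of \<open>g\<close> only admits
  \<open>A = 0\<close> and the saturated branch only \<open>A = \<plusminus>1\<close>.\<close>

lemma gfun_fixed_point_iff:
  fixes r R A :: real
  assumes "0 < r" and "r < R"
  shows "A = gfun r (- A * R) \<longleftrightarrow> A \<in> {-1, 0, 1}"
proof
  assume fixed: "A = gfun r (- A * R)"
  show "A \<in> {-1, 0, 1}"
  proof (cases "\<bar>A * R\<bar> \<le> r")
    case True
    then have "A * r = A * R"
      using fixed \<open>0 < r\<close> by (simp add: gfun_def field_simps)
    then show ?thesis using \<open>r < R\<close> by simp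
  next
    case False
    then have "A = sgn (A * R)" using fixed by (simp add: gfun_def)
    then show ?thesis using assms by (auto simp: sgn_if split: if_splits)
  qed
next
  assume "A \<in> {-1, 0, 1}"
  then show "A = gfun r (- A * R)" using assms by (auto simp: gfun_def)
qed

lemma integral_pos_real:
  fixes f :: "real \<Rightarrow> real"
  assumes "continuous_on {a..b} f" and "a < b" and "\<And>x. x \<in> {a..b} \<Longrightarrow> 0 < f x"
  shows "0 < integral {a..b} f"
  using integral_less_real[of a b "\<lambda>_. 0" f] assms by auto

lemma continuous_on_inverse_wfun_square:
  assumes "continuous_on {a..T} \<eta>"
  shows "continuous_on {a..T} (\<lambda>s. 1 / (wfun T \<kappa> \<eta> s)^2)"
proof -
  have exponent_cont: "continuous_on {a..T} (\<lambda>t. integral {t..T} (\<lambda>s. \<eta> s - \<kappa>))"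
    by (intro indefinite_integral_continuous_1' integrable_continuous_real
        continuous_intros assms)
  show ?thesis
    unfolding wfun_def by (intro continuous_intros exponent_cont) simp
qed

lemma rfun_pos_less_integral:
  assumes "continuous_on {0..T} \<eta>" and "0 < \<delta>" and "\<delta> < T"
  shows "0 < rfun T \<kappa> \<eta> \<delta>" and "rfun T \<kappa> \<eta> \<delta> < integral {0..T} (\<lambda>s. 1 / (wfun T \<kappa> \<eta> s)^2)"
proof -
  define F where "F = (\<lambda>s. 1 / (wfun T \<kappa> \<eta> s)^2)"
  have F_cont: "continuous_on {0..T} F"
    unfolding F_def by (rule continuous_on_inverse_wfun_square[OF assms(1)])
  have F_pos: "0 < F s" for s
    by (simp add: F_def wfun_def)
  have "0 < integral {0..\<delta>} F" "0 < integral {\<delta>..T} F"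
    using assms F_pos F_cont
    by (auto intro!: integral_pos_real elim: continuous_on_subset)
  moreover have "integral {0..\<delta>} F + integral {\<delta>..T} F = integral {0..T} F"
    using Henstock_Kurzweil_Integration.integral_combine[OF _ _ integrable_continuous_real[OF F_cont]]
      assms by simp
  ultimately show "0 < rfun T \<kappa> \<eta> \<delta>" "rfun T \<kappa> \<eta> \<delta> < integral {0..T} F"
    by (simp_all add: rfun_def F_def)
qed

lemma linear_system_solution_iff:
  fixes F \<mu> h :: "real \<Rightarrow> real"
  assumes F: "continuous_on {a..b} F" and "a \<le> b"
  shows "continuous_on {a..b} \<mu> \<and> continuous_on {a..b} h \<and>
      (\<forall>t\<in>{a..b}. (\<mu> has_real_derivative - F t * h t) (at t within {a..b})) \<and>
      (\<forall>t\<in>{a..b}. (h has_real_derivative 0) (at t within {a..b})) \<and> \<mu> a = 0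
    \<longleftrightarrow> (\<exists>A. \<forall>t\<in>{a..b}. \<mu> t = - A * integral {a..t} F \<and> h t = A)"
    (is "?sys \<longleftrightarrow> ?closed")
proof
  define I where "I t = integral {a..t} F" for t
  have I_deriv: "(I has_real_derivative F t) (at t within {a..b})" if "t \<in> {a..b}" for t
    unfolding I_def using integral_has_real_derivative[OF F that] .
  {
    assume ?sys
    then have \<mu>_deriv: "\<And>t. t \<in> {a..b} \<Longrightarrow> (\<mu> has_real_derivative - F t * h t) (at t within {a..b})"
      and h_deriv: "\<And>t. t \<in> {a..b} \<Longrightarrow> (h has_real_derivative 0) (at t within {a..b})"
      and "\<mu> a = 0"
      by auto
    obtain A where h_const: "\<forall>t\<in>{a..b}. h t = A"
      using has_field_derivative_zero_constant[OF convex_real_interval(5) h_deriv] by blast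
    have "((\<lambda>t. \<mu> t + A * I t) has_real_derivative 0) (at t within {a..b})"
      if "t \<in> {a..b}" for t
      using DERIV_add[OF \<mu>_deriv[OF that] DERIV_cmult[OF I_deriv[OF that], of A]]
        h_const that by simp
    then obtain c where c: "\<forall>t\<in>{a..b}. \<mu> t + A * I t = c"
      using has_field_derivative_zero_constant[OF convex_real_interval(5)] by blast
    have "c = 0"
      using c[rule_format, of a] \<open>\<mu> a = 0\<close> \<open>a \<le> b\<close> by (simp add: I_def)
    then have "\<forall>t\<in>{a..b}. \<mu> t = - A * I t"
      using c by (simp add: eq_neg_iff_add_eq_0)
    then show ?closed
      using h_const unfolding I_def by blast
  }
  assume ?closed
  then obtain A where sol: "\<And>t. t \<in> {a..b} \<Longrightarrow> \<mu> t = - A * I t \<and> h t = A"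
    unfolding I_def by blast
  have \<mu>_deriv: "(\<mu> has_real_derivative - F t * h t) (at t within {a..b})"
    if "t \<in> {a..b}" for t
  proof (rule has_field_derivative_transform_within[OF _ zero_less_one that])
    show "((\<lambda>t. - A * I t) has_real_derivative - F t * h t) (at t within {a..b})"
      using DERIV_cmult[OF I_deriv[OF that], of "- A"] sol[OF that] by (simp add: mult.commute)
  qed (use sol in auto)
  have h_deriv: "(h has_real_derivative 0) (at t within {a..b})" if "t \<in> {a..b}" for t
    by (rule has_field_derivative_transform_within[OF DERIV_const zero_less_one that])
      (use sol in auto)
  have "continuous_on {a..b} \<mu>" "continuous_on {a..b} h"
    using \<mu>_deriv h_deriv
    by (meson DERIV_continuous continuous_on_eq_continuous_within)+
  then show ?sys
    using \<mu>_deriv h_deriv sol[of a] \<open>a \<le> b\<close> by (simp add: I_def)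
qed

text \<open>Only the continuity of \<open>\<eta>\<close> enters; the terminal value \<open>\<eta>\<^sub>T = 1\<close> is not needed.\<close>

theorem mainTheorem1:
  fixes T \<kappa> \<delta> :: real and \<eta> :: "real \<Rightarrow> real"
  assumes "T > 0" and "0 < \<delta>" and "\<delta> < T"
    and "\<forall>t\<in>{0..T}. (\<eta> has_real_derivative ((\<eta> t)^2 - 2 * \<kappa> * \<eta> t - 1)) (at t within {0..T})"
    and "\<eta> T = 1"
  shows "\<forall>\<mu> h. is_solution T \<kappa> \<eta> \<delta> \<mu> h \<longleftrightarrow>
           (\<exists>A\<in>{-1, 0, 1::real}. \<forall>t\<in>{0..T}.
               \<mu> t = - A * integral {0..t} (\<lambda>s. 1 / (wfun T \<kappa> \<eta> s)^2) \<and> h t = A)"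
proof (intro allI)
  fix \<mu> h :: "real \<Rightarrow> real"
  let ?F = "\<lambda>s. 1 / (wfun T \<kappa> \<eta> s)^2"
  have \<eta>_cont: "continuous_on {0..T} \<eta>"
    using assms(4) by (meson DERIV_continuous continuous_on_eq_continuous_within)
  have terminal_iff: "h T = gfun (rfun T \<kappa> \<eta> \<delta>) (\<mu> T) \<longleftrightarrow> A \<in> {-1, 0, 1}"
    if "\<forall>t\<in>{0..T}. \<mu> t = - A * integral {0..t} ?F \<and> h t = A" for A
    using that[rule_format, of T] \<open>T > 0\<close>
      gfun_fixed_point_iff[OF rfun_pos_less_integral[OF \<eta>_cont \<open>0 < \<delta>\<close> \<open>\<delta> < T\<close>]]
    by simp
  have "is_solution T \<kappa> \<eta> \<delta> \<mu> h \<longleftrightarrow>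
      (\<exists>A. \<forall>t\<in>{0..T}. \<mu> t = - A * integral {0..t} ?F \<and> h t = A) \<and>
      h T = gfun (rfun T \<kappa> \<eta> \<delta>) (\<mu> T)"
    using linear_system_solution_iff[OF continuous_on_inverse_wfun_square[OF \<eta>_cont]
        less_imp_le[OF \<open>T > 0\<close>], of \<mu> h]
    unfolding is_solution_def by blast
  also have "\<dots> \<longleftrightarrow> (\<exists>A\<in>{-1, 0, 1}. \<forall>t\<in>{0..T}. \<mu> t = - A * integral {0..t} ?F \<and> h t = A)"
    using terminal_iff by blast
  finally show "is_solution T \<kappa> \<eta> \<delta> \<mu> h \<longleftrightarrow>
      (\<exists>A\<in>{-1, 0, 1::real}. \<forall>t\<in>{0..T}. \<mu> t = - A * integral {0..t} ?F \<and> h t = A)" .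
qed

end
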